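(* Fix a history $H$ with EIP-1559 burning fee $r\ge0$ per unit of size, and consider the Single TFM with split parameter $z\in[0,1]$ and all transactions of the same size $s>0$. Assume users cannot overbid ($c_t\le v_t$), the burning fee is not excessively low (the total size of transactions $t$ in the mempool with $v_t\ge r$ does not exceed the block capacity), and all includers and the block producer follow the indicated allocation rules and add no fake transactions. Then for every user with value $v_t$, the bid $b_t=c_t=\min\{v_t,\ r+\mu^{Cost}_{BP}\}$ is a dominant strategy, irrespective of the user's beliefs.
   Context: Model: in one slot there are users, $m$ includers with distinct orders $1,\dots,m$ (order $1$ best), and one block producer. Each user has a transaction of size $s$ and private value $v_t$ per unit of size. Includers choose inclusion lists (at most $c_{Incl}$ transactions each); the block producer, seeing them, builds a block (at most $c_{block}$ transactions). Each transaction in the block pays burning fee $rs$. Block producer cost $\mu^{Cost}_{BP}\ge0$ and includer cost $\mu^{Cost}_{CM}\ge0$ per unit of size per included user transaction. A user whose transaction is in the block has utility $(v_t-r)s$ minus fees paid; otherwise $0$. Single TFM: the bid is a single number $c_t$. Block producer fee $=\max\{\min\{\mu^{Cost}_{BP}s,\ c_ts-rs\}+\max\{c_ts-rs-\mu^{Cost}_{BP}s,0\}(1-z),\ 0\}$, paid when $t$ is in the block. Committee fee $=\max\{c_ts-rs-\mu^{Cost}_{BP}s,0\}\cdot z$, paid to the smallest-order includer listing $t$, only if $t$ is in the block. Indicated allocation rules. Block producer: among transactions with $c_t\ge r+\mu^{Cost}_{BP}$, include those with highest block producer fee (deterministic tie-breaking) until full. Includer of order $j$: compute the set $S$ the block producer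 would include; discard those with committee fee below $\mu^{Cost}_{CM}s$; sort the rest by committee fee decreasingly (deterministic tie-breaking); includer $j$ takes positions $(j-1)c_{Incl}+1,\dots,jc_{Incl}$. *)

theory Defs
  imports Main "HOL.Real"
begin

text \<open>Single TFM, one slot. All transactions have size s. Users form a finite set U
(the mempool); user t bids c t (per unit of size) and has value v t.\<close>

definition bp_fee :: "real \<Rightarrow> real \<Rightarrow> real \<Rightarrow> real \<Rightarrow> real \<Rightarrow> real" where
  "bp_fee r s muBP z ct =
     max (min (muBP * s) (ct * s - r * s) + max (ct * s - r * s - muBP * s) 0 * (1 - z)) 0"

definition cm_fee :: "real \<Rightarrow> real \<Rightarrow> real \<Rightarrow> real \<Rightarrow> real \<Rightarrow> real" where
  "cm_fee r s muBP z ct = max (ct * s - r * s - muBP * s) 0 * z"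

definition precedes :: "('u \<Rightarrow> real) \<Rightarrow> ('u \<Rightarrow> nat) \<Rightarrow> 'u \<Rightarrow> 'u \<Rightarrow> bool" where
  "precedes f tb t' t \<longleftrightarrow> f t' > f t \<or> (f t' = f t \<and> tb t' < tb t)"

text \<open>Indicated block producer rule: among transactions with c t \<ge> r + muBP, take those with
highest block producer fee until cblock transactions are included.\<close>
definition bp_eligible :: "'u set \<Rightarrow> real \<Rightarrow> real \<Rightarrow> ('u \<Rightarrow> real) \<Rightarrow> 'u set" where
  "bp_eligible U r muBP c = {t \<in> U. c t \<ge> r + muBP}"

definition block ::
  "'u set \<Rightarrow> real \<Rightarrow> real \<Rightarrow> real \<Rightarrow> real \<Rightarrow> nat \<Rightarrow> ('u \<Rightarrow> nat) \<Rightarrow> ('u \<Rightarrow> real) \<Rightarrow> 'u set" where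
  "block U r s muBP z cblock tbBP c =
     (let E = bp_eligible U r muBP c;
          f = (\<lambda>u. bp_fee r s muBP z (c u))
      in {t \<in> E. card {t' \<in> E. precedes f tbBP t' t} < cblock})"

text \<open>Indicated includer rule: includer j (1 \<le> j \<le> m) computes the block S, discards
transactions with committee fee below muCM * s, sorts the rest decreasingly by committee fee
and takes positions (j-1)*cIncl+1 .. j*cIncl.\<close>
definition includer_list ::
  "'u set \<Rightarrow> real \<Rightarrow> real \<Rightarrow> real \<Rightarrow> real \<Rightarrow> real \<Rightarrow> nat \<Rightarrow> nat \<Rightarrow> ('u \<Rightarrow> nat) \<Rightarrow> ('u \<Rightarrow> nat)
    \<Rightarrow> ('u \<Rightarrow> real) \<Rightarrow> nat \<Rightarrow> 'u set" where
  "includer_list U r s muBP muCM z cblock cIncl tbBP tbCM c j =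
     (let S = block U r s muBP z cblock tbBP c;
          g = (\<lambda>u. cm_fee r s muBP z (c u));
          D = {t \<in> S. g t \<ge> muCM * s}
      in {t \<in> D. (j - 1) * cIncl \<le> card {t' \<in> D. precedes g tbCM t' t}
                 \<and> card {t' \<in> D. precedes g tbCM t' t} < j * cIncl})"

definition listed ::
  "'u set \<Rightarrow> real \<Rightarrow> real \<Rightarrow> real \<Rightarrow> real \<Rightarrow> real \<Rightarrow> nat \<Rightarrow> nat \<Rightarrow> nat \<Rightarrow> ('u \<Rightarrow> nat) \<Rightarrow> ('u \<Rightarrow> nat)
    \<Rightarrow> ('u \<Rightarrow> real) \<Rightarrow> 'u \<Rightarrow> bool" where
  "listed U r s muBP muCM z m cblock cIncl tbBP tbCM c t \<longleftrightarrow>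
     (\<exists>j\<in>{1..m}. t \<in> includer_list U r s muBP muCM z cblock cIncl tbBP tbCM c j)"

definition utility ::
  "'u set \<Rightarrow> real \<Rightarrow> real \<Rightarrow> real \<Rightarrow> real \<Rightarrow> real \<Rightarrow> nat \<Rightarrow> nat \<Rightarrow> nat \<Rightarrow> ('u \<Rightarrow> nat) \<Rightarrow> ('u \<Rightarrow> nat)
    \<Rightarrow> ('u \<Rightarrow> real) \<Rightarrow> ('u \<Rightarrow> real) \<Rightarrow> 'u \<Rightarrow> real" where
  "utility U r s muBP muCM z m cblock cIncl tbBP tbCM v c t =
     (if t \<in> block U r s muBP z cblock tbBP c
      then (v t - r) * s - bp_fee r s muBP z (c t)
           - (if listed U r s muBP muCM z m cblock cIncl tbBP tbCM c t
              then cm_fee r s muBP z (c t) else 0)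
      else 0)"

end

theory Submission
  imports Defs
begin

text \<open>Once its transaction is in the block, a user pays the block producer at least
  \<open>muBP * s\<close>, and fees only grow with the bid; so no bid, not even an overbid, yields
  more than the surplus \<open>max 0 ((v t - r - muBP) * s)\<close>. Because at most \<open>cblock\<close> users
  have value \<open>\<ge> r\<close> and nobody overbids, every eligible bid enters the block. The bid
  \<open>min (v t) (r + muBP)\<close> is therefore included exactly when the surplus is nonnegative,
  and then it pays exactly \<open>muBP * s\<close> and no committee fee, attaining the bound.\<close>

lemma block_subset_bp_eligible:
  "block U r s muBP z cblock tb c \<subseteq> bp_eligible U r muBP c"
  unfolding block_def Let_def by auto

lemma bp_eligible_subset_block:
  assumes "finite U" and "card (bp_eligible U r muBP c) \<le> cblock"
  shows "bp_eligible U r muBP c \<subseteq> block U r s muBP z cblock tb c"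
proof
  fix t
  assume t: "t \<in> bp_eligible U r muBP c"
  let ?E = "bp_eligible U r muBP c"
  let ?f = "\<lambda>u. bp_fee r s muBP z (c u)"
  have "finite ?E" using assms(1) unfolding bp_eligible_def by simp
  moreover have "{t' \<in> ?E. precedes ?f tb t' t} \<subset> ?E"
    using t by (auto simp: precedes_def)
  ultimately have "card {t' \<in> ?E. precedes ?f tb t' t} < card ?E"
    by (rule psubset_card_mono)
  with assms(2) t show "t \<in> block U r s muBP z cblock tb c"
    unfolding block_def Let_def by simp
qed

lemma bp_eligible_subset_value_ge:
  assumes "muBP \<ge> 0" and "\<forall>u\<in>U. c u \<le> v u"
  shows "bp_eligible U r muBP c \<subseteq> {u \<in> U. v u \<ge> r}"
  using assms unfolding bp_eligible_def by force

lemma bp_fee_eligible: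
  assumes "s \<ge> 0" and "muBP \<ge> 0" and "z \<le> 1" and "b \<ge> r + muBP"
  shows "bp_fee r s muBP z b = muBP * s + (b - r - muBP) * s * (1 - z)"
proof -
  have x: "(b - r - muBP) * s \<ge> 0" using assms by simp
  have "min (muBP * s) (b * s - r * s) = muBP * s"
    using x by (simp add: algebra_simps)
  moreover have "max (b * s - r * s - muBP * s) 0 = (b - r - muBP) * s"
    using x by (simp add: algebra_simps)
  moreover have "muBP * s + (b - r - muBP) * s * (1 - z) \<ge> 0"
    using x assms by simp
  ultimately show ?thesis unfolding bp_fee_def by simp
qed

lemma cm_fee_eligible:
  assumes "s \<ge> 0" and "b \<ge> r + muBP"
  shows "cm_fee r s muBP z b = (b - r - muBP) * s * z"
proof -
  have "(b - r - muBP) * s \<ge> 0" using assms by simp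
  then show ?thesis unfolding cm_fee_def by (simp add: algebra_simps)
qed

lemma utility_le_surplus:
  assumes "s \<ge> 0" and "muBP \<ge> 0" and "0 \<le> z" and "z \<le> 1"
  shows "utility U r s muBP muCM z m cblock cIncl tbBP tbCM v c t
    \<le> max 0 ((v t - r - muBP) * s)"
proof (cases "t \<in> block U r s muBP z cblock tbBP c")
  case True
  then have bid: "c t \<ge> r + muBP"
    using block_subset_bp_eligible unfolding bp_eligible_def by fast
  let ?x = "(c t - r - muBP) * s"
  have "?x \<ge> 0" using bid assms(1) by simp
  then have "bp_fee r s muBP z (c t)
      + (if listed U r s muBP muCM z m cblock cIncl tbBP tbCM c t
         then cm_fee r s muBP z (c t) else 0) \<ge> muBP * s"
    using assms bid by (simp add: bp_fee_eligible cm_fee_eligible)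
  with True show ?thesis unfolding utility_def by (simp add: algebra_simps)
next
  case False
  then show ?thesis unfolding utility_def by simp
qed

lemma utility_reserve_bid:
  assumes "finite U" and "t \<in> U" and "s \<ge> 0" and "muBP \<ge> 0"
    and "\<forall>u\<in>U. c u \<le> v u" and "c t = min (v t) (r + muBP)"
    and "card {u \<in> U. v u \<ge> r} \<le> cblock"
  shows "utility U r s muBP muCM z m cblock cIncl tbBP tbCM v c t
    = max 0 ((v t - r - muBP) * s)"
proof (cases "v t \<ge> r + muBP")
  case True
  have "card (bp_eligible U r muBP c) \<le> card {u \<in> U. v u \<ge> r}"
    using assms(1,4,5) by (intro card_mono bp_eligible_subset_value_ge) auto
  with assms(7) have "bp_eligible U r muBP c \<subseteq> block U r s muBP z cblock tbBP c"
    using assms(1) by (intro bp_eligible_subset_block) auto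
  moreover have "t \<in> bp_eligible U r muBP c"
    using assms(2,6) True unfolding bp_eligible_def by simp
  moreover have "bp_fee r s muBP z (c t) = muBP * s" and "cm_fee r s muBP z (c t) = 0"
    using assms(3,4,6) True unfolding bp_fee_def cm_fee_def by (simp_all add: algebra_simps)
  moreover have "(v t - r - muBP) * s \<ge> 0" using True assms(3) by simp
  ultimately show ?thesis unfolding utility_def by (auto simp: algebra_simps)
next
  case False
  then have "t \<notin> block U r s muBP z cblock tbBP c"
    using assms(6) block_subset_bp_eligible unfolding bp_eligible_def by fastforce
  moreover have "(v t - r - muBP) * s \<le> 0"
    using False assms(3) by (simp add: mult_nonpos_nonneg)
  ultimately show ?thesis unfolding utility_def by simp
qed

theorem mainTheorem3:
  fixes U :: "'u set" and r s muBP muCM z :: real and m cblock cIncl :: nat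
    and tbBP tbCM :: "'u \<Rightarrow> nat" and v c :: "'u \<Rightarrow> real" and t :: 'u and b' :: real
  assumes "finite U" and "t \<in> U"
    and "r \<ge> 0" and "s > 0" and "0 \<le> z" and "z \<le> 1"
    and "muBP \<ge> 0" and "muCM \<ge> 0"
    and "inj_on tbBP U" and "inj_on tbCM U"
    and no_overbid: "\<forall>u\<in>U. c u \<le> v u"
    and "b' \<le> v t"
    and capacity: "real (card {u \<in> U. v u \<ge> r}) * s \<le> real cblock * s"
  shows "utility U r s muBP muCM z m cblock cIncl tbBP tbCM v (c(t := min (v t) (r + muBP))) t
         \<ge> utility U r s muBP muCM z m cblock cIncl tbBP tbCM v (c(t := b')) t"
proof -
  have "card {u \<in> U. v u \<ge> r} \<le> cblock" using capacity \<open>s > 0\<close> by simp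
  then have "utility U r s muBP muCM z m cblock cIncl tbBP tbCM v (c(t := min (v t) (r + muBP))) t
      = max 0 ((v t - r - muBP) * s)"
    using assms(1,2,4,7) no_overbid by (intro utility_reserve_bid) auto
  moreover have "utility U r s muBP muCM z m cblock cIncl tbBP tbCM v (c(t := b')) t
      \<le> max 0 ((v t - r - muBP) * s)"
    using assms(4-7) by (intro utility_le_surplus) auto
  ultimately show ?thesis by simp
qed

end
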